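(* Let $h:(\mathbb{R}^n,0)\to(\mathbb{R}^n,0)$ be a Lipschitz homeomorphism germ such that $c_1\|x\|\le\|h(x)\|\le c_2\|x\|$ for some constants $c_1,c_2>0$ and all $x$ in a neighbourhood of $0$, and let $A\subset\mathbb{R}^n$ be a set-germ at $0$ with $0\in\overline{A}$. Suppose that $A$ satisfies condition (SSP) and that $h$ is an (SSP) map. Then $h(A)$ satisfies condition (SSP).
   Context: For a set-germ $A\subset\mathbb{R}^k$ at $0$ with $0\in\overline A$, $D(A)=\{a\in S^{k-1}:\exists\, x_i\in A\setminus\{0\},\ x_i\to0,\ x_i/\|x_i\|\to a\}$. For sequences, $\|u_m\|\ll\|v_m\|,\|w_m\|$ means $\|u_m\|/\|v_m\|\to0$ and $\|u_m\|/\|w_m\|\to0$. A set-germ $A\subset\mathbb{R}^k$ satisfies condition (SSP) if for every sequence $a_m\in\mathbb{R}^k$ tending to $0$ with $\lim a_m/\|a_m\|\in D(A)$ there is a sequence $b_m\in A$ with $\|a_m-b_m\|\ll\|a_m\|,\|b_m\|$. A map germ $h:(\mathbb{R}^n,0)\to(\mathbb{R}^n,0)$ is an (SSP) map if its graph $\{(x,h(x))\}\subset\mathbb{R}^n\times\mathbb{R}^n$ satisfies condition (SSP) at $(0,0)$. *)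

theory Defs
  imports "HOL-Analysis.Analysis"
begin

definition dirset :: "'a::real_normed_vector set \<Rightarrow> 'a set" where
  "dirset A = {d. \<exists>x::nat \<Rightarrow> 'a. (\<forall>i. x i \<in> A - {0}) \<and> x \<longlonglongrightarrow> 0 \<and>
                   (\<lambda>i. x i /\<^sub>R norm (x i)) \<longlonglongrightarrow> d}"

definition SSP :: "'a::real_normed_vector set \<Rightarrow> bool" where
  "SSP A \<longleftrightarrow> (\<forall>a::nat \<Rightarrow> 'a. a \<longlonglongrightarrow> 0 \<and> (\<exists>d\<in>dirset A. (\<lambda>m. a m /\<^sub>R norm (a m)) \<longlonglongrightarrow> d)
      \<longrightarrow> (\<exists>b::nat \<Rightarrow> 'a. (\<forall>m. b m \<in> A) \<and>
             (\<lambda>m. norm (a m - b m) / norm (a m)) \<longlonglongrightarrow> 0 \<and>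
             (\<lambda>m. norm (a m - b m) / norm (b m)) \<longlonglongrightarrow> 0))"

definition SSP_map :: "('a::real_normed_vector \<Rightarrow> 'a) \<Rightarrow> bool" where
  "SSP_map h \<longleftrightarrow> (\<exists>U. open U \<and> 0 \<in> U \<and> SSP {(x, h x) | x. x \<in> U})"

end

theory Submission
  imports Defs "HOL-Library.Landau_Symbols"
begin

text \<open>Let \<open>a\<^sub>m \<rightarrow> 0\<close> approach \<open>0\<close> in a direction \<open>d\<close> of \<open>h(A)\<close>. Rescaling preimages of a sequence
  realising \<open>d\<close> and passing to a convergent subsequence (the bi-Lipschitz bounds at \<open>0\<close> keep the
  limit \<open>w\<close> away from \<open>0\<close> and \<open>\<infinity>\<close>) shows that \<open>w/|w|\<close> is a direction of \<open>A\<close> and \<open>(w,d)/|(w,d)|\<close> a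
  direction of the graph of \<open>h\<close>. The sequence \<open>(|a\<^sub>m| w, a\<^sub>m)\<close> approaches \<open>0\<close> in the latter direction,
  so (SSP) of the graph yields points \<open>(p\<^sub>m, h p\<^sub>m)\<close> with \<open>p\<^sub>m \<approx> |a\<^sub>m| w\<close> and \<open>h p\<^sub>m \<approx> a\<^sub>m\<close>; then
  \<open>p\<^sub>m\<close> approaches \<open>0\<close> in the direction \<open>w/|w|\<close>, (SSP) of \<open>A\<close> yields \<open>q\<^sub>m \<in> A\<close> with \<open>q\<^sub>m \<approx> p\<^sub>m\<close>, and
  the Lipschitz bound gives \<open>h q\<^sub>m \<approx> h p\<^sub>m \<approx> a\<^sub>m\<close>. Throughout, \<open>\<approx>\<close> means equality up to \<open>o(|a\<^sub>m|)\<close>.\<close>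

lemma smallo_le_trans:
  fixes f g h :: "'i \<Rightarrow> real"
  assumes "eventually (\<lambda>m. norm (f m) \<le> g m) F" "g \<in> o[F](h)"
  shows "f \<in> o[F](h)"
proof (rule landau_o.big_small_trans[OF landau_o.big_mono assms(2)])
  show "eventually (\<lambda>m. norm (f m) \<le> norm (g m)) F"
    using assms(1) by eventually_elim auto
qed

lemma bigo_le_trans:
  fixes f g h :: "'i \<Rightarrow> real"
  assumes "eventually (\<lambda>m. norm (f m) \<le> g m) F" "g \<in> O[F](h)"
  shows "f \<in> O[F](h)"
proof (rule landau_o.big_trans[OF landau_o.big_mono assms(2)])
  show "eventually (\<lambda>m. norm (f m) \<le> norm (g m)) F"
    using assms(1) by eventually_elim auto
qed

lemma smallo_norm_diff_triangle:
  fixes a b c :: "'i \<Rightarrow> 'a::real_normed_vector"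
  assumes "(\<lambda>m. norm (a m - c m)) \<in> o[F](g)" "(\<lambda>m. norm (c m - b m)) \<in> o[F](g)"
  shows "(\<lambda>m. norm (a m - b m)) \<in> o[F](g)"
proof (rule smallo_le_trans[OF always_eventually])
  have "norm (a m - b m) \<le> norm (a m - c m) + norm (c m - b m)" for m
    using norm_triangle_ineq[of "a m - c m" "c m - b m"] by simp
  then show "\<forall>m. norm (norm (a m - b m)) \<le> norm (a m - c m) + norm (c m - b m)"
    by simp
  show "(\<lambda>m. norm (a m - c m) + norm (c m - b m)) \<in> o[F](g)"
    using assms by (rule sum_in_smallo)
qed

lemma tendsto_zero_if_norm_bigo:
  fixes p :: "'i \<Rightarrow> 'a::real_normed_vector" and a :: "'i \<Rightarrow> 'b::real_normed_vector"
  assumes "(\<lambda>m. norm (p m)) \<in> O[F](\<lambda>m. norm (a m))" "(a \<longlongrightarrow> 0) F"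
  shows "(p \<longlongrightarrow> 0) F"
proof -
  obtain c where bound: "eventually (\<lambda>m. norm (p m) \<le> c * norm (a m)) F"
    using landau_o.bigE[OF assms(1)] by auto
  moreover have "((\<lambda>m. c * norm (a m)) \<longlongrightarrow> 0) F"
    by (intro tendsto_mult_right_zero tendsto_norm_zero assms(2))
  ultimately show ?thesis by (rule Lim_null_comparison)
qed

lemma smallo_norm_diff_swap:
  fixes a b :: "'i \<Rightarrow> 'a::real_normed_vector"
  assumes "(\<lambda>m. norm (a m - b m)) \<in> o[F](\<lambda>m. norm (a m))"
  shows "(\<lambda>m. norm (a m - b m)) \<in> o[F](\<lambda>m. norm (b m))"
proof -
  have "eventually (\<lambda>m. norm (a m - b m) \<le> 1/2 * norm (a m)) F"
    using landau_o.smallD[OF assms, of "1/2"] by simp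
  then have "eventually (\<lambda>m. norm (a m) \<le> 2 * norm (b m)) F"
  proof eventually_elim
    case (elim m)
    with norm_triangle_sub[of "a m" "b m"] show ?case by linarith
  qed
  then have "(\<lambda>m. norm (a m)) \<in> O[F](\<lambda>m. norm (b m))"
    by (intro landau_o.bigI[of 2]) auto
  with assms show ?thesis by (rule landau_o.small_big_trans)
qed

lemma eventually_nonzero_if_sgn_tendsto:
  fixes a :: "'i \<Rightarrow> 'a::real_normed_vector"
  assumes "((\<lambda>m. sgn (a m)) \<longlongrightarrow> d) F" "d \<noteq> 0"
  shows "eventually (\<lambda>m. a m \<noteq> 0) F"
  using tendsto_imp_eventually_ne[OF assms] by eventually_elim auto

lemma dirsetI:
  fixes x :: "nat \<Rightarrow> 'a::real_normed_vector"
  assumes "eventually (\<lambda>i. x i \<in> S - {0}) sequentially" "x \<longlonglongrightarrow> 0" "(\<lambda>i. sgn (x i)) \<longlonglongrightarrow> d"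
  shows "d \<in> dirset S"
proof -
  obtain N where N: "\<forall>i\<ge>N. x i \<in> S - {0}"
    using assms(1) by (auto simp: eventually_sequentially)
  have "(\<lambda>i. x (i + N)) \<longlonglongrightarrow> 0" "(\<lambda>i. sgn (x (i + N))) \<longlonglongrightarrow> d"
    using LIMSEQ_ignore_initial_segment assms(2,3) by blast+
  with N show ?thesis
    unfolding dirset_def by (intro CollectI exI[of _ "\<lambda>i. x (i + N)"]) (simp add: sgn_div_norm)
qed

lemma dirsetE:
  assumes "d \<in> dirset S"
  obtains x where "\<forall>i. x i \<in> S - {0}" "x \<longlonglongrightarrow> 0" "(\<lambda>i. sgn (x i)) \<longlonglongrightarrow> d"
  using assms unfolding dirset_def sgn_div_norm by blast

lemma norm_dirset:
  assumes "d \<in> dirset S"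
  shows "norm d = 1"
proof -
  obtain x where x: "\<forall>i. x i \<in> S - {0}" "(\<lambda>i. sgn (x i)) \<longlonglongrightarrow> d"
    using assms by (rule dirsetE)
  have "(\<lambda>i. norm (sgn (x i))) \<longlonglongrightarrow> norm d"
    using x(2) by (rule tendsto_norm)
  moreover have "(\<lambda>i. norm (sgn (x i))) = (\<lambda>i. 1)"
    using x(1) by (auto simp: norm_sgn)
  ultimately show ?thesis
    using LIMSEQ_unique tendsto_const by metis
qed

lemma dirset_mono: "S \<subseteq> T \<Longrightarrow> dirset S \<subseteq> dirset T"
  unfolding dirset_def by blast

lemma dirset_Int_open:
  assumes "open W" "0 \<in> W"
  shows "dirset (S \<inter> W) = dirset S"
proof
  show "dirset (S \<inter> W) \<subseteq> dirset S"
    by (simp add: dirset_mono)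
  show "dirset S \<subseteq> dirset (S \<inter> W)"
  proof
    fix d assume "d \<in> dirset S"
    then obtain x where x: "\<forall>i. x i \<in> S - {0}" "x \<longlonglongrightarrow> 0" "(\<lambda>i. sgn (x i)) \<longlonglongrightarrow> d"
      by (rule dirsetE)
    have "eventually (\<lambda>i. x i \<in> W) sequentially"
      using topological_tendstoD[OF x(2) assms] .
    then have "eventually (\<lambda>i. x i \<in> S \<inter> W - {0}) sequentially"
      by eventually_elim (use x(1) in auto)
    then show "d \<in> dirset (S \<inter> W)"
      using x(2,3) by (rule dirsetI)
  qed
qed

lemma dirset_graph_subset:
  fixes h :: "'a::real_normed_vector \<Rightarrow> 'b::real_normed_vector"
  assumes "open U" "0 \<in> U"
  shows "dirset {(x, h x) | x. x \<in> S} \<subseteq> dirset {(x, h x) | x. x \<in> U}"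
proof -
  have "dirset {(x, h x) | x. x \<in> S} = dirset ({(x, h x) | x. x \<in> S} \<inter> U \<times> UNIV)"
    using assms by (intro dirset_Int_open[symmetric]) (auto simp: open_Times zero_prod_def)
  also have "\<dots> \<subseteq> dirset {(x, h x) | x. x \<in> U}"
    by (intro dirset_mono) auto
  finally show ?thesis .
qed

lemma dirsetI_scaled:
  fixes u :: "nat \<Rightarrow> 'a::real_normed_vector"
  assumes "eventually (\<lambda>i. u i \<in> S - {0}) sequentially" "u \<longlonglongrightarrow> 0"
    and "\<forall>i. t i > 0" "(\<lambda>i. u i /\<^sub>R t i) \<longlonglongrightarrow> v" "v \<noteq> 0"
  shows "sgn v \<in> dirset S"
proof (rule dirsetI[OF assms(1,2)])
  have "sgn (u i /\<^sub>R t i) = sgn (u i)" for i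
    using assms(3) by (simp add: sgn_scaleR)
  then show "(\<lambda>i. sgn (u i)) \<longlonglongrightarrow> sgn v"
    using tendsto_sgn[OF assms(4,5)] by simp
qed

lemma dirset_graph_rescaled:
  fixes h :: "'a::real_normed_vector \<Rightarrow> 'b::real_normed_vector"
  assumes x: "\<forall>i. x i \<in> S - {0}" "x \<longlonglongrightarrow> 0"
    and hx: "\<forall>i. h (x i) \<noteq> 0" "(\<lambda>i. h (x i)) \<longlonglongrightarrow> 0" "(\<lambda>i. sgn (h (x i))) \<longlonglongrightarrow> d"
    and xw: "(\<lambda>i. x i /\<^sub>R norm (h (x i))) \<longlonglongrightarrow> w" "w \<noteq> 0"
  shows "sgn w \<in> dirset S" "sgn (w, d) \<in> dirset {(x, h x) | x. x \<in> S}"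
proof -
  have t_pos: "\<forall>i. norm (h (x i)) > 0"
    using hx(1) by simp
  show "sgn w \<in> dirset S"
    using dirsetI_scaled[OF always_eventually x(2) t_pos xw] x(1) by blast
  show "sgn (w, d) \<in> dirset {(x, h x) | x. x \<in> S}"
  proof (rule dirsetI_scaled[OF always_eventually _ t_pos])
    show "\<forall>i. (x i, h (x i)) \<in> {(x, h x) | x. x \<in> S} - {0}"
      using x(1) by (auto simp: zero_prod_def)
    show "(\<lambda>i. (x i, h (x i))) \<longlonglongrightarrow> 0"
      using tendsto_Pair[OF x(2) hx(2)] by (simp add: zero_prod_def)
    show "(\<lambda>i. (x i, h (x i)) /\<^sub>R norm (h (x i))) \<longlonglongrightarrow> (w, d)"
      using tendsto_Pair[OF xw(1) hx(3)] by (simp add: sgn_div_norm)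
    show "(w, d) \<noteq> 0"
      using xw(2) by (simp add: zero_prod_def)
  qed
qed

lemma dirset_image_graph:
  fixes h :: "'a::{real_normed_vector,heine_borel} \<Rightarrow> 'b::real_normed_vector"
  assumes "d \<in> dirset (h ` S)" "c1 > 0" "c2 > 0"
    and bounds: "\<forall>x\<in>S. c1 * norm x \<le> norm (h x) \<and> norm (h x) \<le> c2 * norm x"
  obtains w where "w \<noteq> 0" "sgn w \<in> dirset S" "sgn (w, d) \<in> dirset {(x, h x) | x. x \<in> S}"
proof -
  obtain y where y: "\<forall>i. y i \<in> h ` S - {0}" "y \<longlonglongrightarrow> 0" "(\<lambda>i. sgn (y i)) \<longlonglongrightarrow> d"
    using assms(1) by (rule dirsetE)
  have "\<forall>i. \<exists>x. x \<in> S \<and> h x = y i"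
    using y(1) by (metis DiffD1 imageE)
  then obtain x where x: "\<forall>i. x i \<in> S \<and> h (x i) = y i"
    by metis
  have ynz: "y i \<noteq> 0" for i
    using y(1) by auto
  have lower: "c1 * norm (x i) \<le> norm (y i)" and upper: "norm (y i) \<le> c2 * norm (x i)" for i
    using bounds x[rule_format, of i] by auto
  have xnz: "x i \<noteq> 0" for i
    using upper[of i] ynz[of i] by auto
  have x0: "x \<longlonglongrightarrow> 0"
  proof (rule Lim_null_comparison)
    show "eventually (\<lambda>i. norm (x i) \<le> norm (y i) / c1) sequentially"
      using lower assms(2) by (simp add: field_simps)
    show "(\<lambda>i. norm (y i) / c1) \<longlonglongrightarrow> 0"
      using y(2) by (intro tendsto_divide_zero tendsto_norm_zero)
  qed
  define z where "z i = x i /\<^sub>R norm (y i)" for i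
  have z_le: "norm (z i) \<le> 1 / c1" and z_ge: "1 / c2 \<le> norm (z i)" for i
    using lower[of i] upper[of i] ynz[of i] assms(2,3) by (simp_all add: z_def field_simps)
  then have "bounded (range z)"
    by (auto simp: bounded_iff)
  then obtain r w where r: "strict_mono r" and zw: "(z \<circ> r) \<longlonglongrightarrow> w"
    using bounded_imp_convergent_subsequence by blast
  have "1 / c2 \<le> norm w"
    using LIMSEQ_le_const[OF tendsto_norm[OF zw]] z_ge by auto
  then have "w \<noteq> 0"
    using assms(3) by auto
  have xr: "\<forall>i. (x \<circ> r) i \<in> S - {0}" "(x \<circ> r) \<longlonglongrightarrow> 0"
    using x xnz LIMSEQ_subseq_LIMSEQ[OF x0 r] by auto
  have hxr: "\<forall>i. h ((x \<circ> r) i) \<noteq> 0" "(\<lambda>i. h ((x \<circ> r) i)) \<longlonglongrightarrow> 0"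
      "(\<lambda>i. sgn (h ((x \<circ> r) i))) \<longlonglongrightarrow> d"
    using x ynz LIMSEQ_subseq_LIMSEQ[OF y(2) r] LIMSEQ_subseq_LIMSEQ[OF y(3) r]
    by (simp_all add: o_def)
  have "(\<lambda>i. (x \<circ> r) i /\<^sub>R norm (h ((x \<circ> r) i))) \<longlonglongrightarrow> w"
    using zw x by (simp add: z_def o_def)
  then show ?thesis
    using that dirset_graph_rescaled[OF xr hxr _ \<open>w \<noteq> 0\<close>] \<open>w \<noteq> 0\<close> by blast
qed

lemma SSPE:
  assumes "SSP S" "a \<longlonglongrightarrow> 0" "(\<lambda>m. sgn (a m)) \<longlonglongrightarrow> d" "d \<in> dirset S"
  obtains b where "\<forall>m. b m \<in> S" "(\<lambda>m. norm (a m - b m)) \<in> o(\<lambda>m. norm (a m))"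
proof -
  obtain b where b: "\<forall>m. b m \<in> S" and rel: "(\<lambda>m. norm (a m - b m) / norm (a m)) \<longlonglongrightarrow> 0"
    using assms unfolding SSP_def sgn_div_norm by blast
  have "d \<noteq> 0"
    using norm_dirset[OF assms(4)] by auto
  then have "eventually (\<lambda>m. a m \<noteq> 0) sequentially"
    using eventually_nonzero_if_sgn_tendsto[OF assms(3)] by blast
  then have "(\<lambda>m. norm (a m - b m)) \<in> o(\<lambda>m. norm (a m))"
    using rel by (intro smalloI_tendsto) (auto elim: eventually_mono)
  with b show ?thesis by (rule that)
qed

lemma SSPI:
  assumes "\<And>a d. a \<longlonglongrightarrow> 0 \<Longrightarrow> (\<lambda>m. sgn (a m)) \<longlonglongrightarrow> d \<Longrightarrow> d \<in> dirset S \<Longrightarrow>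
      \<exists>b. (\<forall>m. b m \<in> S) \<and> (\<lambda>m. norm (a m - b m)) \<in> o(\<lambda>m. norm (a m))"
  shows "SSP S"
  unfolding SSP_def
proof (intro allI impI)
  fix a :: "nat \<Rightarrow> 'a"
  assume "a \<longlonglongrightarrow> 0 \<and> (\<exists>d\<in>dirset S. (\<lambda>m. a m /\<^sub>R norm (a m)) \<longlonglongrightarrow> d)"
  then obtain b where b: "\<forall>m. b m \<in> S" and small: "(\<lambda>m. norm (a m - b m)) \<in> o(\<lambda>m. norm (a m))"
    using assms unfolding sgn_div_norm by blast
  show "\<exists>b. (\<forall>m. b m \<in> S) \<and> (\<lambda>m. norm (a m - b m) / norm (a m)) \<longlonglongrightarrow> 0 \<and>
      (\<lambda>m. norm (a m - b m) / norm (b m)) \<longlonglongrightarrow> 0"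
    using b smalloD_tendsto[OF small] smalloD_tendsto[OF smallo_norm_diff_swap[OF small]] by blast
qed

lemma tendsto_sgn_scaled_pair:
  fixes a :: "'i \<Rightarrow> 'b::real_normed_vector" and w :: "'a::real_normed_vector"
  assumes "((\<lambda>m. sgn (a m)) \<longlongrightarrow> d) F" "d \<noteq> 0"
  shows "((\<lambda>m. sgn (norm (a m) *\<^sub>R w, a m)) \<longlongrightarrow> sgn (w, d)) F"
proof -
  have "((\<lambda>m. sgn (w, sgn (a m))) \<longlongrightarrow> sgn (w, d)) F"
    using assms by (intro tendsto_sgn tendsto_Pair tendsto_const) (auto simp: zero_prod_def)
  moreover have "eventually (\<lambda>m. sgn (w, sgn (a m)) = sgn (norm (a m) *\<^sub>R w, a m)) F"
    using eventually_nonzero_if_sgn_tendsto[OF assms]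
  proof eventually_elim
    case (elim m)
    then have "(norm (a m) *\<^sub>R w, a m) = norm (a m) *\<^sub>R (w, sgn (a m))"
      by (simp add: sgn_div_norm)
    then have "sgn (norm (a m) *\<^sub>R w, a m) = sgn (norm (a m)) *\<^sub>R sgn (w, sgn (a m))"
      by (simp only: sgn_scaleR)
    with elim show ?case
      by simp
  qed
  ultimately show ?thesis
    by (rule Lim_transform_eventually)
qed

lemma SSP_graph_approx:
  fixes h :: "'a::real_normed_vector \<Rightarrow> 'b::real_normed_vector"
  assumes graph: "SSP {(x, h x) | x. x \<in> U}" and wd: "sgn (w, d) \<in> dirset {(x, h x) | x. x \<in> U}"
    and a0: "a \<longlonglongrightarrow> 0" and ad: "(\<lambda>m. sgn (a m)) \<longlonglongrightarrow> d" and "d \<noteq> 0"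
  obtains p where "(\<lambda>m. norm (p m - norm (a m) *\<^sub>R w)) \<in> o(\<lambda>m. norm (a m))"
    "(\<lambda>m. norm (a m - h (p m))) \<in> o(\<lambda>m. norm (a m))"
proof -
  define \<alpha> where "\<alpha> m = (norm (a m) *\<^sub>R w, a m)" for m
  have "(\<lambda>m. norm (a m) *\<^sub>R w) \<longlonglongrightarrow> 0"
    using tendsto_scaleR[OF tendsto_norm[OF a0] tendsto_const[of w]] by simp
  then have "\<alpha> \<longlonglongrightarrow> 0"
    using tendsto_Pair[OF _ a0] unfolding \<alpha>_def zero_prod_def by blast
  moreover have "(\<lambda>m. sgn (\<alpha> m)) \<longlonglongrightarrow> sgn (w, d)"
    unfolding \<alpha>_def using ad \<open>d \<noteq> 0\<close> by (rule tendsto_sgn_scaled_pair)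
  ultimately obtain \<beta> where \<beta>: "\<forall>m. \<beta> m \<in> {(x, h x) | x. x \<in> U}"
    and \<alpha>\<beta>: "(\<lambda>m. norm (\<alpha> m - \<beta> m)) \<in> o(\<lambda>m. norm (\<alpha> m))"
    using SSPE[OF graph _ _ wd] by blast
  have "\<forall>m. \<exists>p. \<beta> m = (p, h p)"
    using \<beta> by blast
  then obtain p where p: "\<forall>m. \<beta> m = (p m, h (p m))"
    by metis
  have "norm (\<alpha> m) \<le> (norm w + 1) * norm (a m)" for m
    using norm_Pair_le[of "norm (a m) *\<^sub>R w" "a m"] by (simp add: \<alpha>_def algebra_simps)
  then have "(\<lambda>m. norm (\<alpha> m)) \<in> O(\<lambda>m. norm (a m))"
    by (intro landau_o.bigI[of "norm w + 1"] always_eventually) (auto simp: add_nonneg_pos)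
  with \<alpha>\<beta> have small: "(\<lambda>m. norm (\<alpha> m - \<beta> m)) \<in> o(\<lambda>m. norm (a m))"
    by (rule landau_o.small_big_trans)
  have diff: "\<alpha> m - \<beta> m = (norm (a m) *\<^sub>R w - p m, a m - h (p m))" for m
    using p by (simp add: \<alpha>_def)
  have fst_le: "norm (p m - norm (a m) *\<^sub>R w) \<le> norm (\<alpha> m - \<beta> m)" for m
    using norm_fst_le[of "norm (a m) *\<^sub>R w - p m" "a m - h (p m)"] by (simp add: diff norm_minus_commute)
  have snd_le: "norm (a m - h (p m)) \<le> norm (\<alpha> m - \<beta> m)" for m
    using norm_snd_le[of "a m - h (p m)" "norm (a m) *\<^sub>R w - p m"] by (simp add: diff)
  show ?thesis
  proof (rule that)
    show "(\<lambda>m. norm (p m - norm (a m) *\<^sub>R w)) \<in> o(\<lambda>m. norm (a m))"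
      using fst_le by (intro smallo_le_trans[OF _ small] always_eventually) simp
    show "(\<lambda>m. norm (a m - h (p m))) \<in> o(\<lambda>m. norm (a m))"
      using snd_le by (intro smallo_le_trans[OF _ small] always_eventually) simp
  qed
qed

lemma near_ray_limits:
  fixes p a :: "nat \<Rightarrow> 'a::real_normed_vector"
  assumes ray: "(\<lambda>m. norm (p m - norm (a m) *\<^sub>R w)) \<in> o(\<lambda>m. norm (a m))"
    and "a \<longlonglongrightarrow> 0" and anz: "eventually (\<lambda>m. a m \<noteq> 0) sequentially" and "w \<noteq> 0"
  shows "(\<lambda>m. norm (p m)) \<in> O(\<lambda>m. norm (a m))" "p \<longlonglongrightarrow> 0" "(\<lambda>m. sgn (p m)) \<longlonglongrightarrow> sgn w"
proof -
  have "\<forall>m. norm (norm (p m)) \<le> norm (p m - norm (a m) *\<^sub>R w) + norm w * norm (a m)"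
    using norm_triangle_sub[of "p _" "norm (a _) *\<^sub>R w"] by (simp add: algebra_simps)
  moreover have "(\<lambda>m. norm (p m - norm (a m) *\<^sub>R w) + norm w * norm (a m)) \<in> O(\<lambda>m. norm (a m))"
    by (intro sum_in_bigo(1) landau_o.small_imp_big[OF ray]) simp
  ultimately show bigo: "(\<lambda>m. norm (p m)) \<in> O(\<lambda>m. norm (a m))"
    by (rule bigo_le_trans[OF always_eventually])
  then show "p \<longlonglongrightarrow> 0"
    using \<open>a \<longlonglongrightarrow> 0\<close> by (rule tendsto_zero_if_norm_bigo)
  have "(\<lambda>m. norm (p m - norm (a m) *\<^sub>R w) / norm (a m)) \<longlonglongrightarrow> 0"
    using smalloD_tendsto[OF ray] .
  moreover have "eventually (\<lambda>m. norm (p m - norm (a m) *\<^sub>R w) / norm (a m) =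
      norm (p m /\<^sub>R norm (a m) - w)) sequentially"
    using anz
  proof eventually_elim
    case (elim m)
    then have "p m /\<^sub>R norm (a m) - w = (p m - norm (a m) *\<^sub>R w) /\<^sub>R norm (a m)"
      by (simp add: scaleR_diff_right)
    then show ?case
      by (simp add: divide_inverse_commute)
  qed
  ultimately have "(\<lambda>m. norm (p m /\<^sub>R norm (a m) - w)) \<longlonglongrightarrow> 0"
    by (rule Lim_transform_eventually)
  then have "(\<lambda>m. sgn (p m /\<^sub>R norm (a m))) \<longlonglongrightarrow> sgn w"
    using \<open>w \<noteq> 0\<close> by (intro tendsto_sgn) (simp_all add: tendsto_norm_zero_iff LIM_zero_iff)
  moreover have "eventually (\<lambda>m. sgn (p m /\<^sub>R norm (a m)) = sgn (p m)) sequentially"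
    using anz by eventually_elim (simp add: sgn_scaleR)
  ultimately show "(\<lambda>m. sgn (p m)) \<longlonglongrightarrow> sgn w"
    by (rule Lim_transform_eventually)
qed

lemma lipschitz_on_smallo:
  fixes h :: "'a::real_normed_vector \<Rightarrow> 'b::real_normed_vector"
  assumes "L-lipschitz_on U h" "open U" "x \<in> U" "(p \<longlongrightarrow> x) F" "(q \<longlongrightarrow> x) F"
    and "(\<lambda>m. norm (p m - q m)) \<in> o[F](g)"
  shows "(\<lambda>m. norm (h (p m) - h (q m))) \<in> o[F](g)"
proof (rule smallo_le_trans)
  have "eventually (\<lambda>m. p m \<in> U) F" "eventually (\<lambda>m. q m \<in> U) F"
    using topological_tendstoD[OF assms(4) assms(2,3)] topological_tendstoD[OF assms(5) assms(2,3)] .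
  then show "eventually (\<lambda>m. norm (norm (h (p m) - h (q m))) \<le> L * norm (p m - q m)) F"
    by eventually_elim (use lipschitz_onD[OF assms(1)] in \<open>auto simp: dist_norm\<close>)
  show "(\<lambda>m. L * norm (p m - q m)) \<in> o[F](g)"
    using assms(6) by (cases "L = 0") auto
qed

lemma SSP_lipschitz_image_approx:
  fixes h :: "'a::real_normed_vector \<Rightarrow> 'b::real_normed_vector"
  assumes "SSP A" "L-lipschitz_on U h" "open U" "0 \<in> U" "0 \<in> closure A"
    and p0: "p \<longlonglongrightarrow> 0" and "(\<lambda>m. sgn (p m)) \<longlonglongrightarrow> e" "e \<in> dirset A"
  obtains b where "\<forall>m. b m \<in> h ` (A \<inter> U)" "(\<lambda>m. norm (h (p m) - b m)) \<in> o(\<lambda>m. norm (p m))"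
proof -
  obtain q where qA: "\<forall>m. q m \<in> A" and pq: "(\<lambda>m. norm (p m - q m)) \<in> o(\<lambda>m. norm (p m))"
    using SSPE[OF assms(1) p0 assms(7,8)] by blast
  have "(\<lambda>m. p m - q m) \<longlonglongrightarrow> 0"
    using landau_o.small_imp_big[OF pq] p0 by (rule tendsto_zero_if_norm_bigo)
  then have q0: "q \<longlonglongrightarrow> 0"
    using tendsto_diff[OF p0] by fastforce
  have hpq: "(\<lambda>m. norm (h (p m) - h (q m))) \<in> o(\<lambda>m. norm (p m))"
    using lipschitz_on_smallo[OF assms(2,3,4) p0 q0 pq] .
  obtain x0 where x0: "x0 \<in> A \<inter> U"
    using open_Int_closure_eq_empty assms(3-5) by blast
  define b where "b m = (if q m \<in> U then h (q m) else h x0)" for m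
  have eq: "eventually (\<lambda>m. norm (h (p m) - h (q m)) = norm (h (p m) - b m)) sequentially"
    using topological_tendstoD[OF q0 assms(3,4)] by eventually_elim (simp add: b_def)
  have "(\<lambda>m. norm (h (p m) - b m)) \<in> o(\<lambda>m. norm (p m))"
    using hpq landau_o.small.in_cong[OF eq] by blast
  moreover have "\<forall>m. b m \<in> h ` (A \<inter> U)"
    using qA x0 by (auto simp: b_def)
  ultimately show ?thesis
    using that by blast
qed

theorem theorem4p5:
  fixes h g :: "'a::euclidean_space \<Rightarrow> 'a" and A U V :: "'a set" and L c1 c2 :: real
  assumes "open U" and "0 \<in> U" and "open V"
    and "homeomorphism U V h g" and "h 0 = 0"
    and "L-lipschitz_on U h"
    and "c1 > 0" and "c2 > 0"
    and "\<forall>x\<in>U. c1 * norm x \<le> norm (h x) \<and> norm (h x) \<le> c2 * norm x"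
    and "0 \<in> closure A"
    and "SSP A" and "SSP_map h"
  shows "SSP (h ` (A \<inter> U))"
proof (rule SSPI)
  fix a :: "nat \<Rightarrow> 'a" and d
  assume a0: "a \<longlonglongrightarrow> 0" and ad: "(\<lambda>m. sgn (a m)) \<longlonglongrightarrow> d" and dD: "d \<in> dirset (h ` (A \<inter> U))"
  obtain U' where "open U'" "0 \<in> U'" and graph: "SSP {(x, h x) | x. x \<in> U'}"
    using \<open>SSP_map h\<close> unfolding SSP_map_def by blast
  obtain w where "w \<noteq> 0" and wA: "sgn w \<in> dirset (A \<inter> U)"
    and wd: "sgn (w, d) \<in> dirset {(x, h x) | x. x \<in> A \<inter> U}"
    using dirset_image_graph[OF dD \<open>c1 > 0\<close> \<open>c2 > 0\<close>] assms(9) by blast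
  have "d \<noteq> 0"
    using norm_dirset[OF dD] by auto
  then obtain p where ray: "(\<lambda>m. norm (p m - norm (a m) *\<^sub>R w)) \<in> o(\<lambda>m. norm (a m))"
    and ahp: "(\<lambda>m. norm (a m - h (p m))) \<in> o(\<lambda>m. norm (a m))"
    using SSP_graph_approx[OF graph _ a0 ad] wd dirset_graph_subset[OF \<open>open U'\<close> \<open>0 \<in> U'\<close>] by blast
  have pa: "(\<lambda>m. norm (p m)) \<in> O(\<lambda>m. norm (a m))" and p0: "p \<longlonglongrightarrow> 0"
    and pw: "(\<lambda>m. sgn (p m)) \<longlonglongrightarrow> sgn w"
    using near_ray_limits[OF ray a0 eventually_nonzero_if_sgn_tendsto[OF ad \<open>d \<noteq> 0\<close>] \<open>w \<noteq> 0\<close>]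
    by auto
  obtain b where b: "\<forall>m. b m \<in> h ` (A \<inter> U)"
    and hpb: "(\<lambda>m. norm (h (p m) - b m)) \<in> o(\<lambda>m. norm (p m))"
    using SSP_lipschitz_image_approx[OF \<open>SSP A\<close> assms(6) \<open>open U\<close> \<open>0 \<in> U\<close> \<open>0 \<in> closure A\<close> p0 pw]
      wA dirset_mono[of "A \<inter> U" A] by blast
  have "(\<lambda>m. norm (a m - b m)) \<in> o(\<lambda>m. norm (a m))"
    using ahp landau_o.small_big_trans[OF hpb pa] by (rule smallo_norm_diff_triangle)
  with b show "\<exists>b. (\<forall>m. b m \<in> h ` (A \<inter> U)) \<and> (\<lambda>m. norm (a m - b m)) \<in> o(\<lambda>m. norm (a m))"
    by blast
qed

end
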